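(* Let $A$ and $B$ be nonempty closed subsets of a complete metric space $(X,\rho)$ such that the ordered pair $(A,B)$ has the $BUC$ property. Let $T:A\cup B\to A\cup B$ be a cyclic map and suppose there exists $k\in(0,1)$ such that $$\rho(Tx,Ty)\le k\,\rho(x,y)+(1-k)\,\mathrm{dist}(A,B)\quad\text{for all }x\in A,\ y\in B.$$ Then $T$ has a unique best proximity point $x$ in $A$, and for every $x_0\in A$ the sequence $\{T^{2n}x_0\}_{n=1}^\infty$ converges to $x$. Moreover $T$ has at least one best proximity point in $B$, and if the ordered pair $(B,A)$ also has the $BUC$ property, then the best proximity point of $T$ in $B$ is unique.
   Context: $\mathrm{dist}(A,B)=\inf\{\rho(a,b):a\in A,\ b\in B\}$. A map $T:A\cup B\to A\cup B$ is cyclic if $T(A)\subseteq B$ and $T(B)\subseteq A$. A point $x\in A$ (resp. $x\in B$) is a best proximity point of $T$ in $A$ (resp. in $B$) if $\rho(x,Tx)=\mathrm{dist}(A,B)$. The ordered pair $(A,B)$ has the bounded $UC$ property ($BUC$) if for all bounded sequences $\{x_n\},\{z_n\}\subset A$ and every sequence $\{y_n\}\subset B$ with $\lim_n\rho(x_n,y_n)=\lim_n\rho(z_n,y_n)=\mathrm{dist}(A,B)$ one has $\lim_n\rho(x_n,z_n)=0$; the property for $(B,A)$ is defined with the roles of $A$ and $B$ interchanged. *)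

theory Defs
  imports "HOL-Analysis.Analysis"
begin

text \<open>dist(A,B) is the library notion setdist (infimum of distances; the sets
  considered are nonempty).\<close>

definition cyclic_map :: "'a set \<Rightarrow> 'a set \<Rightarrow> ('a \<Rightarrow> 'a) \<Rightarrow> bool" where
  "cyclic_map A B T \<longleftrightarrow> T ` A \<subseteq> B \<and> T ` B \<subseteq> A"

definition best_proximity_point ::
  "'a::metric_space set \<Rightarrow> 'a set \<Rightarrow> ('a \<Rightarrow> 'a) \<Rightarrow> 'a \<Rightarrow> bool" where
  "best_proximity_point A B T x \<longleftrightarrow> x \<in> A \<and> dist x (T x) = setdist A B"

definition BUC :: "'a::metric_space set \<Rightarrow> 'a set \<Rightarrow> bool" where
  "BUC A B \<longleftrightarrow>
    (\<forall>x z y :: nat \<Rightarrow> 'a.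
       range x \<subseteq> A \<and> bounded (range x) \<and> range z \<subseteq> A \<and> bounded (range z) \<and>
       range y \<subseteq> B \<and>
       (\<lambda>n. dist (x n) (y n)) \<longlonglongrightarrow> setdist A B \<and>
       (\<lambda>n. dist (z n) (y n)) \<longlonglongrightarrow> setdist A B
       \<longrightarrow> (\<lambda>n. dist (x n) (z n)) \<longlonglongrightarrow> 0)"

end

theory Submission
  imports Defs
begin

text \<open>Iterating the contraction inequality along an orbit shows that points of opposite parity
  far along the orbit are at distance close to \<open>dist(A,B)\<close>. Comparing two even iterates with a
  common odd one, the BUC property makes the even iterates a Cauchy sequence, and passing to
  the limit in the contraction inequality shows that the limit is a best proximity point. BUC
  applied to constant sequences gives \<open>T (T x) = x\<close> and uniqueness, and \<open>T x\<close> is then a best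
  proximity point in \<open>B\<close>.\<close>

lemma BUC_const_eq:
  assumes "BUC A B" and "x \<in> A" and "z \<in> A" and "y \<in> B"
    and "dist x y = setdist A B" and "dist z y = setdist A B"
  shows "x = z"
proof -
  have "(\<lambda>n. dist x z) \<longlonglongrightarrow> 0"
    using assms unfolding BUC_def
    by (elim allE[of _ "\<lambda>_. x"] allE[of _ "\<lambda>_. z"] allE[of _ "\<lambda>_. y"]) auto
  then show ?thesis by (simp add: LIMSEQ_const_iff)
qed

locale cyclic_contraction =
  fixes A B :: "'a::complete_space set" and T :: "'a \<Rightarrow> 'a" and k :: real
  assumes maps_A: "T ` A \<subseteq> B" and maps_B: "T ` B \<subseteq> A"
    and k_pos: "0 < k" and k_less_1: "k < 1"
    and contraction: "\<And>x y. x \<in> A \<Longrightarrow> y \<in> B \<Longrightarrow>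
           dist (T x) (T y) \<le> k * dist x y + (1 - k) * setdist A B"
begin

abbreviation "d \<equiv> setdist A B"

lemma swap: "cyclic_contraction B A T k"
proof
  fix x y assume "x \<in> B" "y \<in> A"
  then show "dist (T x) (T y) \<le> k * dist x y + (1 - k) * setdist B A"
    using contraction[of y x] by (simp add: dist_commute setdist_sym)
qed (use maps_A maps_B k_pos k_less_1 in auto)

lemma contraction_sym:
  "(u \<in> A \<and> v \<in> B) \<or> (u \<in> B \<and> v \<in> A) \<Longrightarrow> dist (T u) (T v) \<le> k * dist u v + (1 - k) * d"
  using contraction by (metis dist_commute)

lemma setdist_le_dist_sym:
  "(u \<in> A \<and> v \<in> B) \<or> (u \<in> B \<and> v \<in> A) \<Longrightarrow> d \<le> dist u v"
  by (metis dist_commute setdist_le_dist)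

lemma iterate_mem: "x \<in> A \<Longrightarrow> (T ^^ n) x \<in> (if even n then A else B)"
  by (induction n) (use maps_A maps_B in auto)

lemma iterate_even_mem: "x \<in> A \<Longrightarrow> even n \<Longrightarrow> (T ^^ n) x \<in> A"
  using iterate_mem[of x n] by simp

lemma iterate_odd_mem: "x \<in> A \<Longrightarrow> odd n \<Longrightarrow> (T ^^ n) x \<in> B"
  using iterate_mem[of x n] by simp

lemma iterates_opposite_parity_mem:
  "x \<in> A \<Longrightarrow> odd (p + q) \<Longrightarrow>
   ((T ^^ p) x \<in> A \<and> (T ^^ q) x \<in> B) \<or> ((T ^^ p) x \<in> B \<and> (T ^^ q) x \<in> A)"
  using iterate_mem[of x p] iterate_mem[of x q] by auto

lemma iterate_step_dist_le:
  assumes "x \<in> A" shows "dist ((T ^^ n) x) ((T ^^ Suc n) x) \<le> dist x (T x)"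
proof (induction n)
  case (Suc n)
  have "dist ((T ^^ Suc n) x) ((T ^^ Suc (Suc n)) x) = dist (T ((T ^^ n) x)) (T ((T ^^ Suc n) x))"
    by simp
  also have "\<dots> \<le> k * dist ((T ^^ n) x) ((T ^^ Suc n) x) + (1 - k) * d"
    using contraction_sym iterates_opposite_parity_mem[OF assms, of n "Suc n"] by simp
  also have "\<dots> \<le> k * dist x (T x) + (1 - k) * dist x (T x)"
    using Suc.IH k_pos k_less_1 setdist_le_dist[of x A "T x" B] assms maps_A
    by (intro add_mono mult_left_mono) auto
  finally show ?case by (simp add: algebra_simps)
qed simp

definition orbit_radius :: "'a \<Rightarrow> real" where
  "orbit_radius x = d + 2 * dist x (T x) / (1 - k)"

text \<open>With \<open>u = T\<^sup>2\<^sup>n\<^sup>+\<^sup>1 x\<close> and \<open>b = dist (T u) x\<close>, the contraction applied to \<open>u, x\<close> and two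
  triangle inequalities give \<open>b \<le> k (D + b) + (1 - k) d + D\<close>, which is solved for \<open>b\<close>.\<close>

lemma even_iterate_dist_le:
  assumes x: "x \<in> A" shows "dist ((T ^^ (2 * n)) x) x \<le> d + (1 + k) * dist x (T x) / (1 - k)"
proof (cases n)
  case 0 then show ?thesis using k_pos k_less_1 by simp
next
  case (Suc m)
  define u where "u = (T ^^ (2 * m + 1)) x"
  define D where "D = dist x (T x)"
  define b where "b = dist (T u) x"
  have u: "u \<in> B" unfolding u_def by (rule iterate_odd_mem[OF x]) simp
  have "b \<le> dist (T u) (T x) + D"
    using dist_triangle[of "T u" x "T x"] by (simp add: b_def D_def dist_commute)
  moreover have "dist (T u) (T x) \<le> k * dist u x + (1 - k) * d"
    using contraction_sym u x by blast
  moreover have "dist u x \<le> D + b"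
    using dist_triangle[of u x "T u"] iterate_step_dist_le[OF x, of "2 * m + 1"]
    by (simp add: u_def b_def D_def)
  then have "k * dist u x \<le> k * (D + b)" using k_pos by simp
  ultimately have "(b - d) * (1 - k) \<le> (1 + k) * D" by (simp add: algebra_simps)
  then have "b - d \<le> (1 + k) * D / (1 - k)" using k_less_1 by (simp add: pos_le_divide_eq)
  then show ?thesis by (simp add: Suc u_def b_def D_def)
qed

lemma iterate_dist_le_orbit_radius:
  assumes x: "x \<in> A" shows "dist ((T ^^ r) x) x \<le> orbit_radius x"
proof -
  have radius: "orbit_radius x = d + (1 + k) * dist x (T x) / (1 - k) + dist x (T x)"
    using k_less_1 by (simp add: orbit_radius_def field_simps)
  obtain n where "r = 2 * n \<or> r = Suc (2 * n)" by (metis oddE evenE Suc_eq_plus1)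
  then show ?thesis
  proof
    assume r: "r = 2 * n"
    show ?thesis
      unfolding r using even_iterate_dist_le[OF x, of n] radius zero_le_dist[of x "T x"] by linarith
  next
    assume r: "r = Suc (2 * n)"
    have "dist ((T ^^ r) x) x \<le> dist ((T ^^ r) x) ((T ^^ (2 * n)) x) + dist ((T ^^ (2 * n)) x) x"
      by (rule dist_triangle)
    then show ?thesis
      using even_iterate_dist_le[OF x, of n] iterate_step_dist_le[OF x, of "2 * n"] radius r
      by (simp add: dist_commute)
  qed
qed

lemma bounded_orbit: "x \<in> A \<Longrightarrow> bounded (range (\<lambda>n. (T ^^ n) x))"
  using iterate_dist_le_orbit_radius
  by (intro bounded_subset[OF bounded_cball[of x "orbit_radius x"]]) (auto simp: dist_commute)

lemma opposite_parity_iterates_dist_le: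
  assumes x: "x \<in> A"
  shows "odd (p + q) \<Longrightarrow> i \<le> min p q \<Longrightarrow>
    dist ((T ^^ p) x) ((T ^^ q) x) \<le> k ^ i * (2 * orbit_radius x) + d"
proof (induction i arbitrary: p q)
  case 0
  have "dist ((T ^^ p) x) ((T ^^ q) x) \<le> 2 * orbit_radius x"
    using dist_triangle2[of "(T ^^ p) x" "(T ^^ q) x" x] iterate_dist_le_orbit_radius[OF x, of p]
      iterate_dist_le_orbit_radius[OF x, of q] by linarith
  then show ?case by (simp add: add_increasing2)
next
  case (Suc i)
  then obtain p' q' where pq: "p = Suc p'" "q = Suc q'" by (metis Suc_le_D min.bounded_iff)
  have shifted: "odd (p' + q')" "i \<le> min p' q'" using Suc.prems pq by auto
  have "dist ((T ^^ p) x) ((T ^^ q) x) = dist (T ((T ^^ p') x)) (T ((T ^^ q') x))"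
    using pq by simp
  also have "\<dots> \<le> k * dist ((T ^^ p') x) ((T ^^ q') x) + (1 - k) * d"
    by (rule contraction_sym[OF iterates_opposite_parity_mem[OF x shifted(1)]])
  also have "\<dots> \<le> k * (k ^ i * (2 * orbit_radius x) + d) + (1 - k) * d"
    using Suc.IH[OF shifted] k_pos by simp
  finally show ?case by (simp add: algebra_simps)
qed

lemma opposite_parity_iterates_dist_tendsto:
  assumes x: "x \<in> A" and pq: "\<And>j. odd (p j + q j) \<and> j \<le> p j \<and> j \<le> q j"
  shows "(\<lambda>j. dist ((T ^^ p j) x) ((T ^^ q j) x)) \<longlonglongrightarrow> d"
proof (rule real_tendsto_sandwich[OF _ _ tendsto_const])
  show "\<forall>\<^sub>F j in sequentially. d \<le> dist ((T ^^ p j) x) ((T ^^ q j) x)"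
    using setdist_le_dist_sym iterates_opposite_parity_mem[OF x] pq by auto
  show "\<forall>\<^sub>F j in sequentially.
      dist ((T ^^ p j) x) ((T ^^ q j) x) \<le> k ^ j * (2 * orbit_radius x) + d"
    using opposite_parity_iterates_dist_le[OF x] pq by auto
  have "(\<lambda>j. k ^ j) \<longlonglongrightarrow> 0" using k_pos k_less_1 by (intro LIMSEQ_power_zero) simp
  then have "(\<lambda>j. k ^ j * (2 * orbit_radius x) + d) \<longlonglongrightarrow> 0 * (2 * orbit_radius x) + d"
    by (intro tendsto_add tendsto_mult tendsto_const)
  then show "(\<lambda>j. k ^ j * (2 * orbit_radius x) + d) \<longlonglongrightarrow> d" by simp
qed

text \<open>If the even iterates were not Cauchy, two subsequences of them would stay \<open>e\<close> apart
  while both approaching the common odd iterates \<open>T\<^sup>2\<^sup>j\<^sup>+\<^sup>1 x\<close> at distance \<open>d\<close>, contradicting BUC.\<close>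

lemma Cauchy_even_iterates:
  assumes buc: "BUC A B" and x: "x \<in> A"
  shows "Cauchy (\<lambda>n. (T ^^ (2 * n)) x)"
proof (rule ccontr)
  assume "\<not> Cauchy (\<lambda>n. (T ^^ (2 * n)) x)"
  then obtain e where e: "e > 0"
    and "\<forall>N. \<exists>m\<ge>N. \<exists>n\<ge>N. e \<le> dist ((T ^^ (2 * m)) x) ((T ^^ (2 * n)) x)"
    unfolding Cauchy_def by (auto simp: not_less)
  then obtain m n where mn: "\<And>N. m N \<ge> N \<and> n N \<ge> N \<and>
      e \<le> dist ((T ^^ (2 * m N)) x) ((T ^^ (2 * n N)) x)"
    by metis
  have mn_le: "j \<le> 2 * m j" "j \<le> 2 * n j" for j using mn[of j] by auto
  define xs where "xs j = (T ^^ (2 * m j)) x" for j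
  define zs where "zs j = (T ^^ (2 * n j)) x" for j
  define ys where "ys j = (T ^^ (2 * j + 1)) x" for j
  have "ys j \<in> B" for j unfolding ys_def by (rule iterate_odd_mem[OF x]) simp
  then have "range xs \<subseteq> A" "range zs \<subseteq> A" "range ys \<subseteq> B"
    unfolding xs_def zs_def using iterate_even_mem[OF x] by auto
  moreover have "bounded (range xs)" "bounded (range zs)"
    unfolding xs_def zs_def by (auto intro: bounded_subset[OF bounded_orbit[OF x]])
  moreover have "(\<lambda>j. dist (xs j) (ys j)) \<longlonglongrightarrow> d"
    unfolding xs_def ys_def by (rule opposite_parity_iterates_dist_tendsto[OF x]) (simp add: mn_le)
  moreover have "(\<lambda>j. dist (zs j) (ys j)) \<longlonglongrightarrow> d"
    unfolding zs_def ys_def by (rule opposite_parity_iterates_dist_tendsto[OF x]) (simp add: mn_le)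
  ultimately have "(\<lambda>j. dist (xs j) (zs j)) \<longlonglongrightarrow> 0"
    using buc[unfolded BUC_def, rule_format, of xs zs ys] by blast
  moreover have "e \<le> dist (xs j) (zs j)" for j using mn[of j] by (simp add: xs_def zs_def)
  ultimately have "e \<le> 0" by (intro LIMSEQ_le_const) auto
  with e show False by simp
qed

lemma even_iterates_tendsto_best_proximity_point:
  assumes buc: "BUC A B" and "closed A" and x0: "x0 \<in> A"
  obtains x where "best_proximity_point A B T x" "(\<lambda>n. (T ^^ (2 * n)) x0) \<longlonglongrightarrow> x"
proof -
  define s where "s = (\<lambda>n. (T ^^ (2 * n)) x0)"
  define w where "w n = (T ^^ (2 * n + 1)) x0" for n
  obtain x where lim: "s \<longlonglongrightarrow> x"
    using Cauchy_even_iterates[OF buc x0] unfolding s_def Cauchy_convergent_iff convergent_def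
    by blast
  have x: "x \<in> A"
    using closed_sequentially[OF \<open>closed A\<close> _ lim] iterate_even_mem[OF x0] by (simp add: s_def)
  have s_Suc: "s (Suc n) = T (w n)" for n by (simp add: s_def w_def)
  have bound: "dist x (T x) \<le> dist x (T (w n)) + k * (dist (T (w n)) (w n) + dist (T (w n)) x)
      + (1 - k) * d" for n
  proof -
    have "w n \<in> B" unfolding w_def by (rule iterate_odd_mem[OF x0]) simp
    then have "dist (T (w n)) (T x) \<le> k * dist (w n) x + (1 - k) * d"
      using contraction_sym x by blast
    moreover have "k * dist (w n) x \<le> k * (dist (T (w n)) (w n) + dist (T (w n)) x)"
      using dist_triangle3[of "w n" x "T (w n)"] k_pos by simp
    ultimately show ?thesis using dist_triangle[of x "T x" "T (w n)"] by linarith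
  qed
  have opposite: "(\<lambda>n. dist (s (Suc n)) (w n)) \<longlonglongrightarrow> d"
    unfolding s_def w_def by (rule opposite_parity_iterates_dist_tendsto[OF x0]) simp
  have to_x: "(\<lambda>n. dist (s (Suc n)) x) \<longlonglongrightarrow> 0" "(\<lambda>n. dist x (s (Suc n))) \<longlonglongrightarrow> 0"
    using tendsto_dist[OF LIMSEQ_Suc[OF lim] tendsto_const[of x]]
      tendsto_dist[OF tendsto_const[of x] LIMSEQ_Suc[OF lim]] by simp_all
  have "(\<lambda>n. dist x (s (Suc n)) + k * (dist (s (Suc n)) (w n) + dist (s (Suc n)) x) + (1 - k) * d)
      \<longlonglongrightarrow> 0 + k * (d + 0) + (1 - k) * d"
    by (intro tendsto_add tendsto_mult tendsto_const opposite to_x)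
  then have "dist x (T x) \<le> 0 + k * (d + 0) + (1 - k) * d"
    by (rule LIMSEQ_le_const) (use bound[unfolded s_Suc[symmetric]] in blast)
  moreover have "d \<le> dist x (T x)" using x maps_A setdist_le_dist by blast
  ultimately have "best_proximity_point A B T x"
    using x by (simp add: best_proximity_point_def algebra_simps)
  with lim show ?thesis using that by (simp add: s_def)
qed

lemma best_proximity_point_period_two:
  assumes buc: "BUC A B" and bp: "best_proximity_point A B T x"
  shows "T (T x) = x"
proof -
  have x: "x \<in> A" and dx: "dist x (T x) = d" using bp by (auto simp: best_proximity_point_def)
  have Tx: "T x \<in> B" and TTx: "T (T x) \<in> A" using x maps_A maps_B by auto
  have "dist (T (T x)) (T x) \<le> k * dist (T x) x + (1 - k) * d"
    using contraction_sym Tx x by blast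
  then have "dist (T (T x)) (T x) = d"
    using dx setdist_le_dist[OF TTx Tx] by (simp add: dist_commute algebra_simps)
  then show ?thesis using BUC_const_eq[OF buc x TTx Tx] dx by simp
qed

lemma best_proximity_point_unique:
  assumes buc: "BUC A B"
    and bx: "best_proximity_point A B T x" and by': "best_proximity_point A B T y"
  shows "x = y"
proof -
  have x: "x \<in> A" and y: "y \<in> A" and dx: "dist x (T x) = d"
    using bx by' by (auto simp: best_proximity_point_def)
  have Tx: "T x \<in> B" and Ty: "T y \<in> B" using x y maps_A by auto
  define a where "a = dist (T x) y"
  define b where "b = dist x (T y)"
  have "a \<le> k * b + (1 - k) * d"
    using contraction[OF x Ty] best_proximity_point_period_two[OF buc by']
    by (simp add: a_def b_def)
  moreover have "b \<le> k * a + (1 - k) * d"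
    using contraction_sym[of "T x" y] Tx y best_proximity_point_period_two[OF buc bx]
    by (simp add: a_def b_def)
  then have "k * b \<le> k * (k * a + (1 - k) * d)" using k_pos by simp
  ultimately have "(1 - k * k) * a \<le> (1 - k * k) * d" by (simp add: algebra_simps)
  moreover have "0 < 1 - k * k" using mult_strict_left_mono[OF k_less_1 k_pos] k_less_1 by simp
  ultimately have "a \<le> d" by simp
  then have "dist y (T x) = d"
    using setdist_le_dist[OF y Tx] by (simp add: a_def dist_commute)
  then show ?thesis using BUC_const_eq[OF buc x y Tx] dx by simp
qed

lemma best_proximity_point_image:
  assumes buc: "BUC A B" and bp: "best_proximity_point A B T x"
  shows "best_proximity_point B A T (T x)"
  using bp maps_A best_proximity_point_period_two[OF buc bp]
  by (auto simp: best_proximity_point_def setdist_sym dist_commute)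

end

theorem theorem31:
  fixes A B :: "'a::complete_space set" and T :: "'a \<Rightarrow> 'a" and k :: real
  assumes "A \<noteq> {}" and "B \<noteq> {}" and "closed A" and "closed B"
    and "BUC A B"
    and "cyclic_map A B T"
    and "0 < k" and "k < 1"
    and "\<And>x y. x \<in> A \<Longrightarrow> y \<in> B \<Longrightarrow>
           dist (T x) (T y) \<le> k * dist x y + (1 - k) * setdist A B"
  shows "(\<exists>x. (\<forall>x'. best_proximity_point A B T x' \<longleftrightarrow> x' = x) \<and>
             (\<forall>x0\<in>A. (\<lambda>n. (T ^^ (2 * n)) x0) \<longlonglongrightarrow> x)) \<and>
         (\<exists>y. best_proximity_point B A T y) \<and>
         (BUC B A \<longrightarrow> (\<exists>!y. best_proximity_point B A T y))"
proof -
  interpret AB: cyclic_contraction A B T k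
    using assms by unfold_locales (auto simp: cyclic_map_def)
  interpret BA: cyclic_contraction B A T k by (rule AB.swap)
  obtain a where "a \<in> A" using assms(1) by blast
  then obtain x where x: "best_proximity_point A B T x"
    using AB.even_iterates_tendsto_best_proximity_point[OF assms(5,3)] by blast
  have unique: "\<forall>x'. best_proximity_point A B T x' \<longleftrightarrow> x' = x"
    using AB.best_proximity_point_unique[OF assms(5) x] x by blast
  have "\<forall>x0\<in>A. (\<lambda>n. (T ^^ (2 * n)) x0) \<longlonglongrightarrow> x"
    using AB.even_iterates_tendsto_best_proximity_point[OF assms(5,3)] unique by metis
  moreover have "best_proximity_point B A T (T x)"
    by (rule AB.best_proximity_point_image[OF assms(5) x])
  ultimately show ?thesis using unique BA.best_proximity_point_unique by blast
qed

end
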